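(* Let $I\subset\mathbb{R}$ be an open interval, let $\bm{a}:I\to\mathbb{R}^2_1$ be a timelike frontal with Gauss mapping $\bm{\nu}:I\to S^1_1$, and let $r:I\to\mathbb{R}^+$ be a positive constant function. If $\bm{a}$ is not constant (i.e. its image is not a single point), then the pseudo-circle family $C_{(\bm{a}(t),-r(t))}$ does not create an envelope.
   Context: All objects are $C^\infty$. The Minkowski plane $\mathbb{R}^2_1$ is $\mathbb{R}^2$ with $\langle\bm{x},\bm{y}\rangle=-x_1y_1+x_2y_2$; $S^1_1=\{\bm{x}:\langle\bm{x},\bm{x}\rangle=1\}$. A smooth $\bm{a}:I\to\mathbb{R}^2_1$ is a timelike frontal if there is a smooth $\bm{\nu}:I\to S^1_1$ (Gauss mapping) with $\langle\frac{d\bm{a}}{dt}(t),\bm{\nu}(t)\rangle=0$ for all $t$. $C_{(\bm{a}(t),-r(t))}=\{\bm{x}\in\mathbb{R}^2_1:\langle\bm{x}-\bm{a}(t),\bm{x}-\bm{a}(t)\rangle=-r(t)^2\}$. An envelope of $C_{(\bm{a}(t),-r(t))}$ is a smooth $f:I\to\mathbb{R}^2_1$ with $f(t)\in C_{(\bm{a}(t),-r(t))}$ and $\langle\frac{df}{dt}(t),f(t)-\bm{a}(t)\rangle=0$ for all $t\in I$. *)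

theory Defs
  imports "HOL-Analysis.Analysis"
begin

text \<open>Minkowski plane R^2_1 modelled as real \<times> real, with x = (x1, x2) and
  pseudo-scalar product -x1 y1 + x2 y2.\<close>
definition mink :: "real \<times> real \<Rightarrow> real \<times> real \<Rightarrow> real" where
  "mink x y = - fst x * fst y + snd x * snd y"

definition deSitter1 :: "(real \<times> real) set" where
  "deSitter1 = {x. mink x x = 1}"

definition smooth_on :: "real set \<Rightarrow> (real \<Rightarrow> 'a::real_normed_vector) \<Rightarrow> bool" where
  "smooth_on I f \<longleftrightarrow> (\<exists>D :: nat \<Rightarrow> real \<Rightarrow> 'a. D 0 = f \<and>
      (\<forall>k. \<forall>t\<in>I. (D k has_vector_derivative D (Suc k) t) (at t)))"

definition timelike_frontal :: "real set \<Rightarrow> (real \<Rightarrow> real \<times> real) \<Rightarrow> (real \<Rightarrow> real \<times> real) \<Rightarrow> bool" where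
  "timelike_frontal I a \<nu> \<longleftrightarrow> smooth_on I a \<and> smooth_on I \<nu> \<and>
      (\<forall>t\<in>I. \<nu> t \<in> deSitter1) \<and>
      (\<forall>t\<in>I. mink (vector_derivative a (at t)) (\<nu> t) = 0)"

definition pseudo_circle :: "real \<times> real \<Rightarrow> real \<Rightarrow> (real \<times> real) set" where
  "pseudo_circle c r = {x. mink (x - c) (x - c) = - (r^2)}"

definition is_envelope :: "real set \<Rightarrow> (real \<Rightarrow> real \<times> real) \<Rightarrow> (real \<Rightarrow> real) \<Rightarrow> (real \<Rightarrow> real \<times> real) \<Rightarrow> bool" where
  "is_envelope I a r f \<longleftrightarrow> smooth_on I f \<and>
      (\<forall>t\<in>I. f t \<in> pseudo_circle (a t) (r t)) \<and>
      (\<forall>t\<in>I. mink (vector_derivative f (at t)) (f t - a t) = 0)"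

end

theory Submission
  imports Defs
begin

text \<open>If an envelope f existed, then g = f - a would satisfy mink g g = -c^2 with c constant,
  so g' is pseudo-orthogonal to g; as f' is pseudo-orthogonal to g by the envelope condition,
  so is a'. The frontal condition makes a' pseudo-orthogonal to the spacelike vector \<nu> as well,
  and a spacelike and a timelike vector span the plane, so a' = 0 on the interval I and a is
  constant.\<close>

lemma mink_commute: "mink x y = mink y x"
  by (simp add: mink_def mult.commute)

lemma bounded_bilinear_mink: "bounded_bilinear mink"
proof -
  have mink_eq: "mink = (\<lambda>x. inner (- fst x, snd x))"
    by (simp add: mink_def fun_eq_iff inner_Pair)
  have "bounded_linear (\<lambda>x :: real \<times> real. (- fst x, snd x))"
    by (intro bounded_linear_Pair bounded_linear_minus bounded_linear_fst bounded_linear_snd)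
  then show ?thesis
    unfolding mink_eq by (rule bounded_bilinear.comp1[OF bounded_bilinear_inner])
qed

lemma has_real_derivative_mink_self:
  assumes "(g has_vector_derivative g') (at t)"
  shows "((\<lambda>s. mink (g s) (g s)) has_real_derivative 2 * mink g' (g t)) (at t)"
  using bounded_bilinear.has_vector_derivative[OF bounded_bilinear_mink assms assms]
  by (simp add: has_real_derivative_iff_has_vector_derivative mink_commute[of "g t"])

lemma mink_orthogonal_derivative_if_constant_square:
  assumes "open S" "t \<in> S" "(g has_vector_derivative g') (at t)"
    and "\<And>s. s \<in> S \<Longrightarrow> mink (g s) (g s) = k"
  shows "mink g' (g t) = 0"
proof -
  have "((\<lambda>s. mink (g s) (g s)) has_real_derivative 0) (at t)"
    by (rule has_field_derivative_transform_within_open[OF DERIV_const assms(1,2)])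
      (simp add: assms(4))
  with has_real_derivative_mink_self[OF assms(3)] have "2 * mink g' (g t) = 0"
    by (rule DERIV_unique)
  then show ?thesis
    by simp
qed

lemma mink_cross_square:
  "(fst x * snd y - snd x * fst y)^2 = (mink x y)^2 - mink x x * mink y y"
  by (simp add: mink_def power2_eq_square algebra_simps)

text \<open>The determinant of (n, g) is nonzero by the identity above, and Cramer's rule does the rest.\<close>
lemma mink_orthogonal_spacelike_timelike_eq_0:
  assumes "mink n n > 0" "mink g g < 0" "mink v n = 0" "mink v g = 0"
  shows "v = 0"
proof -
  define d where "d = fst n * snd g - snd n * fst g"
  have "d^2 > 0"
    unfolding d_def mink_cross_square
    using mult_pos_neg[OF assms(1,2)] zero_le_power2[of "mink n g"] by linarith
  then have "d \<noteq> 0" by auto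
  have "fst v * d = snd n * mink v g - snd g * mink v n"
    and "snd v * d = fst n * mink v g - fst g * mink v n"
    by (simp_all add: d_def mink_def algebra_simps)
  with assms(3,4) \<open>d \<noteq> 0\<close> show ?thesis
    by (simp add: prod_eq_iff)
qed

lemma smooth_on_has_vector_derivative:
  assumes "smooth_on I f" "t \<in> I"
  shows "(f has_vector_derivative vector_derivative f (at t)) (at t)"
proof -
  obtain D where "D 0 = f" "\<forall>k. \<forall>t\<in>I. (D k has_vector_derivative D (Suc k) t) (at t)"
    using assms(1) unfolding smooth_on_def by blast
  then have "(f has_vector_derivative D 1 t) (at t)"
    using assms(2) by auto
  then show ?thesis
    by (simp add: vector_derivative_at)
qed

lemma envelope_center_stationary:
  assumes "open I" "timelike_frontal I a \<nu>" "c \<noteq> 0" "\<forall>t\<in>I. r t = c"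
    and "is_envelope I a r f" "t \<in> I"
  shows "(a has_vector_derivative 0) (at t)"
proof -
  define a' f' where "a' = vector_derivative a (at t)" and "f' = vector_derivative f (at t)"
  have da: "(a has_vector_derivative a') (at t)"
    using assms(2,6) smooth_on_has_vector_derivative[of I a t]
    unfolding a'_def timelike_frontal_def by simp
  have df: "(f has_vector_derivative f') (at t)"
    using assms(5,6) smooth_on_has_vector_derivative[of I f t]
    unfolding f'_def is_envelope_def by simp
  have on_circle: "mink (f s - a s) (f s - a s) = - (c^2)" if "s \<in> I" for s
    using assms(4,5) that unfolding is_envelope_def pseudo_circle_def by auto
  have "mink (f' - a') (f t - a t) = 0"
    using mink_orthogonal_derivative_if_constant_square[OF assms(1,6)
        has_vector_derivative_diff[OF df da]] on_circle by blast
  moreover have "mink f' (f t - a t) = 0"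
    using assms(5,6) unfolding f'_def is_envelope_def by blast
  ultimately have "mink a' (f t - a t) = 0"
    by (simp add: mink_def algebra_simps)
  moreover have "mink a' (\<nu> t) = 0" "mink (\<nu> t) (\<nu> t) = 1"
    using assms(2,6) unfolding a'_def timelike_frontal_def deSitter1_def by auto
  moreover have "mink (f t - a t) (f t - a t) < 0"
    using on_circle[OF assms(6)] assms(3) by simp
  ultimately have "a' = 0"
    by (intro mink_orthogonal_spacelike_timelike_eq_0[of "\<nu> t" "f t - a t"]) simp_all
  with da show ?thesis
    by simp
qed

theorem proposition2:
  fixes I :: "real set" and a \<nu> :: "real \<Rightarrow> real \<times> real" and r :: "real \<Rightarrow> real" and c :: real
  assumes "open I" and "is_interval I" and "I \<noteq> {}"
    and "timelike_frontal I a \<nu>"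
    and "c > 0" and "\<forall>t\<in>I. r t = c"
    and "\<not> (\<exists>p. \<forall>t\<in>I. a t = p)"
  shows "\<not> (\<exists>f. is_envelope I a r f)"
proof
  assume "\<exists>f. is_envelope I a r f"
  then obtain f where f: "is_envelope I a r f" ..
  have "convex I"
    using assms(2) by (simp add: is_interval_convex_1)
  moreover have "(a has_vector_derivative 0) (at t within I)" if "t \<in> I" for t
    using envelope_center_stationary[OF assms(1,4) _ assms(6) f that] assms(5)
    by (simp add: has_vector_derivative_at_within)
  ultimately obtain p where "\<And>t. t \<in> I \<Longrightarrow> a t = p"
    using has_vector_derivative_zero_constant by blast
  with assms(7) show False
    by blast
qed

end
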